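(* Let $k\geq 1$ and let $\zeta_1,\dots,\zeta_k\in(0,1)$ be real numbers such that $1,\zeta_1,\dots,\zeta_k$ are linearly independent over $\mathbb{Q}$. With the sequences $b_n^{(s)}$, $b_n^{\prime(s)}$ defined in the context, $$\omega\geq\max\left\{\sup_{s\geq 2}\limsup_{n\to\infty}\frac{b^{(s)}_{n+1}-b^{(s)}_n-1}{b^{(s)}_n},\ \sup_{s\ge2}\limsup_{n\to\infty}\frac{b^{\prime(s)}_{n+1}-b^{\prime(s)}_n-1}{b^{\prime(s)}_n}\right\}.$$
   Context: For $X>0$ let $\omega_1(X)$ be the supremum of all real $\nu$ such that $|x|\leq X$, $|\zeta_i x-y_i|\leq X^{-\nu}$ ($1\le i\le k$) has a nonzero solution $(x,y_1,\dots,y_k)\in\mathbb{Z}^{k+1}$; $\omega=\limsup_{X\to\infty}\omega_1(X)$. For an integer $s\ge2$, let $a_1^{i,(s)}<a_2^{i,(s)}<\cdots$ be the positions (after the point) of the nonzero digits in the base-$s$ expansion of $\zeta_i$, and $a_1^{\prime i,(s)}<a_2^{\prime i,(s)}<\cdots$ the positions of the nonzero digits in the base-$s$ expansion of $1-\zeta_i$. Let $(b_n^{(s)})_{n\ge1}$ be the increasing enumeration of $\{a_n^{i,(s)}:1\le i\le k, n\ge1\}$ and $(b_n^{\prime(s)})_{n\ge1}$ the increasing enumeration of $\{a_n^{\prime i,(s)}:1\le i\le k,n\ge1\}$. *)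

theory Defs
  imports "HOL-Analysis.Analysis" "HOL-Library.Liminf_Limsup" "HOL-Library.Infinite_Set"
begin

definition omega1 :: "nat \<Rightarrow> (nat \<Rightarrow> real) \<Rightarrow> real \<Rightarrow> ereal" where
  "omega1 k zeta X = Sup (ereal ` {nu :: real. \<exists>(x::int) (y::nat \<Rightarrow> int).
      (x \<noteq> 0 \<or> (\<exists>i\<in>{1..k}. y i \<noteq> 0)) \<and> \<bar>real_of_int x\<bar> \<le> X \<and>
      (\<forall>i\<in>{1..k}. \<bar>zeta i * real_of_int x - real_of_int (y i)\<bar> \<le> X powr (- nu))})"

definition omega :: "nat \<Rightarrow> (nat \<Rightarrow> real) \<Rightarrow> ereal" where
  "omega k zeta = Limsup at_top (\<lambda>X::real. omega1 k zeta X)"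

definition digit :: "nat \<Rightarrow> real \<Rightarrow> nat \<Rightarrow> int" where
  "digit s z j = \<lfloor>real s ^ j * z\<rfloor> mod int s"

definition nzpos :: "nat \<Rightarrow> real \<Rightarrow> nat set" where
  "nzpos s z = {j. j \<ge> 1 \<and> digit s z j \<noteq> 0}"

text \<open>Increasing enumeration of the union of positions; bseq k s f n is b_{n+1}
  (0-based indexing of the sequence b_1 < b_2 < ...).\<close>
definition bseq :: "nat \<Rightarrow> nat \<Rightarrow> (nat \<Rightarrow> real) \<Rightarrow> nat \<Rightarrow> nat" where
  "bseq k s f n = enumerate (\<Union>i\<in>{1..k}. nzpos s (f i)) n"

definition gapratio :: "nat \<Rightarrow> nat \<Rightarrow> (nat \<Rightarrow> real) \<Rightarrow> ereal" where
  "gapratio k s f = limsup (\<lambda>n. ereal ((real (bseq k s f (Suc n)) - real (bseq k s f n) - 1)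
                                   / real (bseq k s f n)))"

end

theory Submission
  imports Defs
begin

text \<open>If the base-s digits of z vanish at positions m+1, ..., m+g, then s^m z lies within
  s^(-g) of an integer. With m = b_n and g = b_(n+1) - b_n - 1, the integer x = s^m therefore
  approximates every zeta_i at height X = s^m with exponent g/m, and since s^(b_n) tends to
  infinity the limsup of these exponents is at most omega. Linear independence makes zeta_1
  irrational, so there are infinitely many nonzero digits and b is a genuine enumeration. The
  bound for 1 - zeta_i follows because omega is invariant under zeta_i \<mapsto> 1 - zeta_i
  (replace y_i by x - y_i).\<close>

lemma floor_power_Suc_mult_eq:
  assumes "s \<ge> 1"
  shows "\<lfloor>real s ^ Suc j * z\<rfloor> = int s * \<lfloor>real s ^ j * z\<rfloor> + digit s z (Suc j)"
proof -
  define A where "A = \<lfloor>real s ^ Suc j * z\<rfloor>"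
  have "A div int s = \<lfloor>real s ^ Suc j * z / real_of_int (int s)\<rfloor>"
    unfolding A_def by (subst floor_divide_real_eq_div) auto
  also have "real s ^ Suc j * z / real_of_int (int s) = real s ^ j * z"
    using assms by (simp add: field_simps)
  finally have "A div int s = \<lfloor>real s ^ j * z\<rfloor>" .
  then show ?thesis
    unfolding digit_def A_def[symmetric] by (metis div_mult_mod_eq mult.commute)
qed

lemma floor_power_add_mult_if_digits_zero:
  assumes "s \<ge> 1" and "\<And>j. m < j \<Longrightarrow> j \<le> m + g \<Longrightarrow> digit s z j = 0"
  shows "\<lfloor>real s ^ (m + g) * z\<rfloor> = int s ^ g * \<lfloor>real s ^ m * z\<rfloor>"
  using assms(2)
proof (induction g)
  case (Suc g)
  have "\<lfloor>real s ^ (m + Suc g) * z\<rfloor>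
          = int s * \<lfloor>real s ^ (m + g) * z\<rfloor> + digit s z (Suc (m + g))"
    using floor_power_Suc_mult_eq[OF assms(1)] by simp
  also have "digit s z (Suc (m + g)) = 0"
    using Suc.prems by simp
  also have "\<lfloor>real s ^ (m + g) * z\<rfloor> = int s ^ g * \<lfloor>real s ^ m * z\<rfloor>"
    using Suc by simp
  finally show ?case by simp
qed simp

lemma power_mult_frac_less_if_digits_zero:
  assumes "s \<ge> 1" and "\<And>j. m < j \<Longrightarrow> j \<le> m + g \<Longrightarrow> digit s z j = 0"
  shows "real s ^ g * frac (real s ^ m * z) < 1"
proof -
  have "real s ^ g * (real s ^ m * z) = real s ^ (m + g) * z"
    by (simp add: power_add mult_ac)
  also have "\<dots> < real_of_int \<lfloor>real s ^ (m + g) * z\<rfloor> + 1"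
    by linarith
  also have "\<dots> = real s ^ g * \<lfloor>real s ^ m * z\<rfloor> + 1"
    using floor_power_add_mult_if_digits_zero[OF assms] by simp
  finally show ?thesis
    by (simp add: frac_def right_diff_distrib)
qed

lemma infinite_nzpos_if_irrational:
  assumes "s \<ge> 2" and "z \<notin> \<rat>"
  shows "infinite (nzpos s z)"
proof
  assume "finite (nzpos s z)"
  then obtain M where M: "\<forall>j\<in>nzpos s z. j \<le> M"
    using finite_nat_set_iff_bounded_le by blast
  have zero: "digit s z j = 0" if "M < j" for j
  proof (rule ccontr)
    assume "digit s z j \<noteq> 0"
    with that have "j \<in> nzpos s z"
      unfolding nzpos_def by simp
    with M that show False
      by auto
  qed
  define r where "r = frac (real s ^ M * z)"
  have small: "real s ^ g * r < 1" for g
    unfolding r_def using assms(1) zero by (intro power_mult_frac_less_if_digits_zero) auto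
  have "r = 0"
  proof (rule ccontr)
    assume "r \<noteq> 0"
    then have "r > 0"
      using frac_ge_0 r_def by (metis order_le_less)
    obtain g where "inverse r < real s ^ g"
      using real_arch_pow[of "real s" "inverse r"] assms(1) by auto
    with \<open>r > 0\<close> have "1 < real s ^ g * r"
      by (simp add: field_simps)
    with small[of g] show False by simp
  qed
  then have "z = real_of_int \<lfloor>real s ^ M * z\<rfloor> / real s ^ M"
    using assms(1) unfolding r_def frac_def by (simp add: field_simps)
  then have "z \<in> \<rat>"
    by (metis Rats_divide Rats_of_int Rats_power Rats_of_nat)
  with assms(2) show False by simp
qed

lemma enumerate_gap_not_in:
  fixes S :: "nat set"
  assumes "infinite S" and "enumerate S n < j" and "j < enumerate S (Suc n)"
  shows "j \<notin> S"
proof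
  assume "j \<in> S"
  then obtain m where "j = enumerate S m"
    using enumerate_Ex[OF assms(1)] by blast
  with assms show False
    by (simp add: enumerate_mono_iff)
qed

lemma Limsup_mono_filter:
  fixes f :: "'a \<Rightarrow> 'b::complete_lattice"
  assumes "F \<le> G"
  shows "Limsup F f \<le> Limsup G f"
  unfolding Limsup_def
  by (rule INF_superset_mono) (use assms in \<open>auto simp: le_filter_def\<close>)

lemma Limsup_comp_le_if_filterlim:
  fixes f :: "'b \<Rightarrow> 'c::complete_lattice"
  assumes "filterlim X G F"
  shows "Limsup F (\<lambda>x. f (X x)) \<le> Limsup G f"
proof -
  have "Limsup F (\<lambda>x. f (X x)) \<le> Limsup (filtermap X F) f"
    by (rule Limsup_filtermap_ge)
  also have "\<dots> \<le> Limsup G f"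
    using assms unfolding filterlim_def by (rule Limsup_mono_filter)
  finally show ?thesis .
qed

lemma omega1_ge:
  assumes "x \<noteq> 0" and "\<bar>real_of_int x\<bar> \<le> X"
    and "\<And>i. i \<in> {1..k} \<Longrightarrow> \<bar>zeta i * real_of_int x - real_of_int (y i)\<bar> \<le> X powr (- nu)"
  shows "ereal nu \<le> omega1 k zeta X"
  unfolding omega1_def using assms by (intro Sup_upper imageI CollectI exI[of _ x]) blast

lemma omega1_one_minus_ge:
  "omega1 k zeta X \<le> omega1 k (\<lambda>i. 1 - zeta i) X"
  unfolding omega1_def
proof (intro Sup_subset_mono image_mono subsetI, elim CollectE exE conjE, intro CollectI)
  fix nu x and y :: "nat \<Rightarrow> int"
  assume "x \<noteq> 0 \<or> (\<exists>i\<in>{1..k}. y i \<noteq> 0)" and "\<bar>real_of_int x\<bar> \<le> X"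
    and approx: "\<forall>i\<in>{1..k}. \<bar>zeta i * real_of_int x - real_of_int (y i)\<bar> \<le> X powr (- nu)"
  moreover have "\<bar>(1 - zeta i) * real_of_int x - real_of_int (x - y i)\<bar>
                   = \<bar>zeta i * real_of_int x - real_of_int (y i)\<bar>" for i
    by (simp add: algebra_simps abs_minus_commute)
  ultimately show "\<exists>x y. (x \<noteq> 0 \<or> (\<exists>i\<in>{1..k}. y i \<noteq> 0)) \<and> \<bar>real_of_int x\<bar> \<le> X \<and>
      (\<forall>i\<in>{1..k}. \<bar>(1 - zeta i) * real_of_int x - real_of_int (y i)\<bar> \<le> X powr (- nu))"
    by (intro exI[of _ x] exI[of _ "\<lambda>i. x - y i"]) auto
qed

lemma omega_one_minus: "omega k (\<lambda>i. 1 - zeta i) = omega k zeta"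
proof -
  have "omega1 k (\<lambda>i. 1 - zeta i) = omega1 k zeta"
    using omega1_one_minus_ge[of k zeta] omega1_one_minus_ge[of k "\<lambda>i. 1 - zeta i"]
    by (intro ext antisym) auto
  then show ?thesis
    unfolding omega_def by simp
qed

lemma gap_ratio_le_omega1:
  assumes "s \<ge> 2" and S: "infinite (\<Union>i\<in>{1..k}. nzpos s (zeta i))"
  defines "b \<equiv> bseq k s zeta"
  shows "ereal ((real (b (Suc n)) - real (b n) - 1) / real (b n))
           \<le> omega1 k zeta (real s ^ b n)"
proof -
  define m where "m = b n"
  define g where "g = b (Suc n) - b n - 1"
  have step: "b n < b (Suc n)"
    unfolding b_def bseq_def using enumerate_step[OF S] .
  have "m \<in> (\<Union>i\<in>{1..k}. nzpos s (zeta i))"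
    unfolding m_def b_def bseq_def using enumerate_in_set[OF S] .
  then have "m \<ge> 1"
    unfolding nzpos_def by auto
  have zero: "digit s (zeta i) j = 0" if "i \<in> {1..k}" "m < j" "j \<le> m + g" for i j
  proof -
    have "j \<notin> (\<Union>i\<in>{1..k}. nzpos s (zeta i))"
      using enumerate_gap_not_in[OF S, of n j] that step
      unfolding m_def g_def b_def bseq_def by linarith
    with that \<open>m \<ge> 1\<close> show ?thesis
      unfolding nzpos_def by auto
  qed
  define nu where "nu = real g / real m"
  have "(real s ^ m) powr (- nu) = real s powr (- real g)"
    using \<open>s \<ge> 2\<close> \<open>m \<ge> 1\<close> by (simp add: nu_def powr_realpow[symmetric] powr_powr)
  also have "\<dots> = inverse (real s ^ g)"
    using \<open>s \<ge> 2\<close> by (simp add: powr_minus powr_realpow)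
  finally have height: "(real s ^ m) powr (- nu) = inverse (real s ^ g)" .
  have "\<bar>zeta i * real_of_int (int s ^ m) - real_of_int \<lfloor>real s ^ m * zeta i\<rfloor>\<bar>
          \<le> (real s ^ m) powr (- nu)" if "i \<in> {1..k}" for i
  proof -
    have "real s ^ g * frac (real s ^ m * zeta i) < 1"
      using \<open>s \<ge> 2\<close> zero[OF that] by (intro power_mult_frac_less_if_digits_zero) auto
    then have "frac (real s ^ m * zeta i) \<le> inverse (real s ^ g)"
      using \<open>s \<ge> 2\<close> by (simp add: field_simps)
    then show ?thesis
      unfolding height by (simp add: frac_def frac_ge_0 mult.commute)
  qed
  then have "ereal nu \<le> omega1 k zeta (real s ^ m)"
    using \<open>s \<ge> 2\<close> by (intro omega1_ge[of "int s ^ m"]) auto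
  moreover have "real g = real (b (Suc n)) - real (b n) - 1"
    using step unfolding g_def by auto
  ultimately show ?thesis
    unfolding nu_def m_def by simp
qed

lemma gapratio_le_omega:
  assumes "s \<ge> 2" and S: "infinite (\<Union>i\<in>{1..k}. nzpos s (zeta i))"
  shows "gapratio k s zeta \<le> omega k zeta"
proof -
  define X where "X n = real s ^ bseq k s zeta n" for n
  have "filterlim X at_top sequentially"
  proof (rule filterlim_at_top_mono[OF filterlim_real_sequentially always_eventually], intro allI)
    fix n
    have "n \<le> bseq k s zeta n"
      unfolding bseq_def using le_enumerate[OF S] .
    also have "\<dots> < 2 ^ bseq k s zeta n"
      by (rule less_exp)
    finally have "real n \<le> 2 ^ bseq k s zeta n"
      by (metis of_nat_le_iff of_nat_numeral of_nat_power order_less_imp_le)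
    also have "\<dots> \<le> X n"
      unfolding X_def using assms(1) by (intro power_mono) auto
    finally show "real n \<le> X n" .
  qed
  then have "limsup (\<lambda>n. omega1 k zeta (X n)) \<le> omega k zeta"
    unfolding omega_def by (rule Limsup_comp_le_if_filterlim)
  moreover have "gapratio k s zeta \<le> limsup (\<lambda>n. omega1 k zeta (X n))"
    unfolding gapratio_def X_def
    by (intro Limsup_mono always_eventually allI gap_ratio_le_omega1 assms)
  ultimately show ?thesis by simp
qed

lemma not_Rats_if_rat_independent:
  assumes indep: "\<forall>(c0::rat) (c::nat \<Rightarrow> rat).
           of_rat c0 + (\<Sum>i\<in>{1..k}. of_rat (c i) * zeta i) = (0::real)
           \<longrightarrow> c0 = 0 \<and> (\<forall>i\<in>{1..k}. c i = 0)"
    and j: "j \<in> {1..k}"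
  shows "zeta j \<notin> \<rat>"
proof
  assume "zeta j \<in> \<rat>"
  then obtain q where q: "zeta j = of_rat q"
    by (auto elim: Rats_cases)
  define c where "c i = (if i = j then 1 else 0 :: rat)" for i
  have "(\<Sum>i\<in>{1..k}. of_rat (c i) * zeta i) = (\<Sum>i\<in>{1..k}. if i = j then zeta i else 0)"
    by (rule sum.cong) (auto simp: c_def)
  also have "\<dots> = zeta j"
    using j by simp
  finally have "(\<Sum>i\<in>{1..k}. of_rat (c i) * zeta i) = zeta j" .
  then have "of_rat (- q) + (\<Sum>i\<in>{1..k}. of_rat (c i) * zeta i) = (0::real)"
    using q by (simp add: of_rat_minus)
  with indep j have "c j = 0"
    by blast
  then show False
    by (simp add: c_def)
qed

theorem corollary2p2:
  fixes k :: nat and zeta :: "nat \<Rightarrow> real"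
  assumes "k \<ge> 1"
    and "\<forall>i\<in>{1..k}. 0 < zeta i \<and> zeta i < 1"
    and "\<forall>(c0::rat) (c::nat \<Rightarrow> rat).
           of_rat c0 + (\<Sum>i\<in>{1..k}. of_rat (c i) * zeta i) = (0::real)
           \<longrightarrow> c0 = 0 \<and> (\<forall>i\<in>{1..k}. c i = 0)"
  shows "omega k zeta \<ge> max (SUP s\<in>{2..}. gapratio k s zeta)
                             (SUP s\<in>{2..}. gapratio k s (\<lambda>i. 1 - zeta i))"
proof -
  have one: "1 \<in> {1..k}"
    using assms(1) by simp
  have irrational: "zeta 1 \<notin> \<rat>" "1 - zeta 1 \<notin> \<rat>"
    using not_Rats_if_rat_independent[OF assms(3) one] by (auto dest: Rats_diff[OF Rats_1])
  have infinite: "infinite (\<Union>i\<in>{1..k}. nzpos s (f i))"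
    if "s \<ge> 2" and "f 1 \<notin> \<rat>" for s and f :: "nat \<Rightarrow> real"
    using infinite_nzpos_if_irrational[OF that] one by (meson UN_upper infinite_super)
  have "gapratio k s zeta \<le> omega k zeta" if "s \<ge> 2" for s
    using gapratio_le_omega infinite irrational that by blast
  moreover have "gapratio k s (\<lambda>i. 1 - zeta i) \<le> omega k zeta" if "s \<ge> 2" for s
    using gapratio_le_omega[where zeta = "\<lambda>i. 1 - zeta i"] infinite[where f = "\<lambda>i. 1 - zeta i"]
      irrational that omega_one_minus by simp
  ultimately show ?thesis
    by (auto intro!: SUP_least)
qed

end
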